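(* Let $K$ be a finite simplicial complex, let $\sigma_i^{(q)}$ be a $q$-simplex and $\sigma_j^{(q')}$ a $q'$-simplex of $K$, and suppose that $\sigma_i^{(q)}\sim_{L_{p^*}}\sigma_j^{(q')}$ for some integer $p\ge 0$. Put $p'=q+q'-p$. If $\sigma_i^{(q)}\not\sim_{U_{p'}}\sigma_j^{(q')}$, then $\sigma_i^{(q)}\not\sim_{U_{p'+h}}\sigma_j^{(q')}$ for every integer $h\geq 1$.
   Context: $K$ is a finite abstract simplicial complex: a finite collection of nonempty finite vertex sets (simplices) closed under taking nonempty subsets. A $q$-simplex $\sigma^{(q)}$ has $q+1$ vertices; a face of a simplex is a simplex of $K$ contained in it as a set (a simplex is a face of itself). $p$-lower adjacency: $\sigma^{(q)}\sim_{L_p}\sigma^{(q')}$ iff there is a $p$-simplex $\tau^{(p)}$ of $K$ with $\tau^{(p)}\subseteq\sigma^{(q)}$ and $\tau^{(p)}\subseteq\sigma^{(q')}$. Strict $p$-lower adjacency: $\sigma^{(q)}\sim_{L_{p^*}}\sigma^{(q')}$ iff $\sigma^{(q)}\sim_{L_p}\sigma^{(q')}$ and $\sigma^{(q)}\not\sim_{L_{p+1}}\sigma^{(q')}$. $p$-upper adjacency: $\sigma^{(q)}\sim_{U_p}\sigma^{(q')}$ iff there is a $p$-simplex $\tau^{(p)}$ of $K$ with $\sigma^{(q)}\subseteq\tau^{(p)}$ and $\sigma^{(q')}\subseteq\tau^{(p)}$. *)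

theory Defs
  imports Main
begin

definition simplicial_complex :: "'a set set \<Rightarrow> bool" where
  "simplicial_complex K \<longleftrightarrow> finite K \<and>
     (\<forall>\<sigma>\<in>K. finite \<sigma> \<and> \<sigma> \<noteq> {}) \<and>
     (\<forall>\<sigma>\<in>K. \<forall>\<tau>. \<tau> \<subseteq> \<sigma> \<and> \<tau> \<noteq> {} \<longrightarrow> \<tau> \<in> K)"

definition is_simplex :: "'a set set \<Rightarrow> nat \<Rightarrow> 'a set \<Rightarrow> bool" where
  "is_simplex K q \<sigma> \<longleftrightarrow> \<sigma> \<in> K \<and> card \<sigma> = q + 1"

definition lower_adj :: "'a set set \<Rightarrow> nat \<Rightarrow> 'a set \<Rightarrow> 'a set \<Rightarrow> bool" where
  "lower_adj K p \<sigma> \<sigma>' \<longleftrightarrow> (\<exists>\<tau>. is_simplex K p \<tau> \<and> \<tau> \<subseteq> \<sigma> \<and> \<tau> \<subseteq> \<sigma>')"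

definition strict_lower_adj :: "'a set set \<Rightarrow> nat \<Rightarrow> 'a set \<Rightarrow> 'a set \<Rightarrow> bool" where
  "strict_lower_adj K p \<sigma> \<sigma>' \<longleftrightarrow> lower_adj K p \<sigma> \<sigma>' \<and> \<not> lower_adj K (p + 1) \<sigma> \<sigma>'"

definition upper_adj :: "'a set set \<Rightarrow> nat \<Rightarrow> 'a set \<Rightarrow> 'a set \<Rightarrow> bool" where
  "upper_adj K p \<sigma> \<sigma>' \<longleftrightarrow> (\<exists>\<tau>. is_simplex K p \<tau> \<and> \<sigma> \<subseteq> \<tau> \<and> \<sigma>' \<subseteq> \<tau>)"

end

theory Submission
  imports Defs
begin

text \<open>Strict \<open>p\<close>-lower adjacency says that the two simplices share exactly \<open>p + 1\<close> vertices,
  so their union has \<open>q + q' - p + 1\<close> vertices. A simplex containing both contains this union,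
  which is therefore itself a simplex of \<open>K\<close> by closure under faces, i.e. a \<open>(q + q' - p)\<close>-simplex
  witnessing upper adjacency.\<close>

lemma simplicial_complex_face:
  assumes "simplicial_complex K" "\<sigma> \<in> K" "\<tau> \<subseteq> \<sigma>" "\<tau> \<noteq> {}"
  shows "\<tau> \<in> K"
  using assms unfolding simplicial_complex_def by blast

lemma simplicial_complex_finite_simplex:
  assumes "simplicial_complex K" "\<sigma> \<in> K"
  shows "finite \<sigma>"
  using assms unfolding simplicial_complex_def by blast

lemma lower_adj_iff_card_Int:
  assumes "simplicial_complex K" "\<sigma> \<in> K"
  shows "lower_adj K p \<sigma> \<sigma>' \<longleftrightarrow> p + 1 \<le> card (\<sigma> \<inter> \<sigma>')"
proof
  have "finite (\<sigma> \<inter> \<sigma>')"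
    using simplicial_complex_finite_simplex[OF assms] by blast
  moreover assume "lower_adj K p \<sigma> \<sigma>'"
  then obtain \<tau> where "card \<tau> = p + 1" "\<tau> \<subseteq> \<sigma> \<inter> \<sigma>'"
    unfolding lower_adj_def is_simplex_def by auto
  ultimately show "p + 1 \<le> card (\<sigma> \<inter> \<sigma>')"
    using card_mono by metis
next
  assume "p + 1 \<le> card (\<sigma> \<inter> \<sigma>')"
  then obtain \<tau> where \<tau>: "\<tau> \<subseteq> \<sigma> \<inter> \<sigma>'" "card \<tau> = p + 1"
    by (meson obtain_subset_with_card_n)
  moreover from \<tau> have "\<tau> \<noteq> {}" by auto
  ultimately have "\<tau> \<in> K"
    using simplicial_complex_face[OF assms] by blast
  with \<tau> show "lower_adj K p \<sigma> \<sigma>'"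
    unfolding lower_adj_def is_simplex_def by auto
qed

lemma strict_lower_adj_iff_card_Int:
  assumes "simplicial_complex K" "\<sigma> \<in> K"
  shows "strict_lower_adj K p \<sigma> \<sigma>' \<longleftrightarrow> card (\<sigma> \<inter> \<sigma>') = p + 1"
  using lower_adj_iff_card_Int[OF assms] unfolding strict_lower_adj_def by auto

lemma card_Un_strict_lower_adj:
  assumes "simplicial_complex K" "is_simplex K q \<sigma>" "is_simplex K q' \<sigma>'"
    and "strict_lower_adj K p \<sigma> \<sigma>'"
  shows "card (\<sigma> \<union> \<sigma>') = q + q' - p + 1"
proof -
  have in_K: "\<sigma> \<in> K" "\<sigma>' \<in> K" and card: "card \<sigma> = q + 1" "card \<sigma>' = q' + 1"
    using assms(2,3) unfolding is_simplex_def by auto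
  have fin: "finite \<sigma>" "finite \<sigma>'"
    using in_K simplicial_complex_finite_simplex[OF assms(1)] by auto
  have Int: "card (\<sigma> \<inter> \<sigma>') = p + 1"
    using assms(4) strict_lower_adj_iff_card_Int[OF assms(1) in_K(1)] by simp
  have "card (\<sigma> \<inter> \<sigma>') \<le> card \<sigma>"
    using fin by (simp add: card_mono)
  with Int card have "p \<le> q" by simp
  with card_Un_Int[OF fin] Int card show ?thesis by simp
qed

lemma upper_adj_imp_Un_in_complex:
  assumes "simplicial_complex K" "upper_adj K n \<sigma> \<sigma>'" "\<sigma> \<union> \<sigma>' \<noteq> {}"
  shows "\<sigma> \<union> \<sigma>' \<in> K"
proof -
  obtain \<tau> where "\<tau> \<in> K" "\<sigma> \<union> \<sigma>' \<subseteq> \<tau>"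
    using assms(2) unfolding upper_adj_def is_simplex_def by auto
  then show ?thesis using simplicial_complex_face[OF assms(1)] assms(3) by blast
qed

lemma upper_adj_card_Un:
  assumes "simplicial_complex K" "upper_adj K n \<sigma> \<sigma>'" "\<sigma> \<union> \<sigma>' \<noteq> {}"
  shows "upper_adj K (card (\<sigma> \<union> \<sigma>') - 1) \<sigma> \<sigma>'"
proof -
  have "\<sigma> \<union> \<sigma>' \<in> K"
    using upper_adj_imp_Un_in_complex[OF assms] .
  moreover have "card (\<sigma> \<union> \<sigma>') \<noteq> 0"
    using simplicial_complex_finite_simplex[OF assms(1) calculation] assms(3) by simp
  ultimately show ?thesis
    unfolding upper_adj_def is_simplex_def by auto
qed

theorem mainTheorem1:
  fixes K :: "'a set set" and \<sigma>i \<sigma>j :: "'a set" and q q' p :: nat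
  assumes "simplicial_complex K"
    and "is_simplex K q \<sigma>i" and "is_simplex K q' \<sigma>j"
    and "strict_lower_adj K p \<sigma>i \<sigma>j"
    and "\<not> upper_adj K (q + q' - p) \<sigma>i \<sigma>j"
  shows "\<forall>h::nat. h \<ge> 1 \<longrightarrow> \<not> upper_adj K (q + q' - p + h) \<sigma>i \<sigma>j"
proof (intro allI impI notI)
  fix h :: nat
  assume "upper_adj K (q + q' - p + h) \<sigma>i \<sigma>j"
  moreover have card_Un: "card (\<sigma>i \<union> \<sigma>j) = q + q' - p + 1"
    using card_Un_strict_lower_adj[OF assms(1-4)] .
  then have "\<sigma>i \<union> \<sigma>j \<noteq> {}" by auto
  ultimately have "upper_adj K (card (\<sigma>i \<union> \<sigma>j) - 1) \<sigma>i \<sigma>j"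
    using upper_adj_card_Un[OF assms(1)] by blast
  with card_Un assms(5) show False by simp
qed

end
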